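(* Let $P$ be a right LCM semigroup with identity and let $\vartheta$ be a right action of $P$ on a group $G$ by identity-preserving endomorphisms. Then the right semidirect product $P{}_\vartheta\!\ltimes G$ is a right LCM semigroup such that $J(P)\cong J(P{}_\vartheta\!\ltimes G)$ (via $pP\mapsto (pP)\times G$, $\emptyset\mapsto\emptyset$) and $(P{}_\vartheta\!\ltimes G)^*=P^*{}_\vartheta\!\ltimes G$. Moreover, $P{}_\vartheta\!\ltimes G$ is cancellative if and only if $P$ is cancellative and every $\vartheta_p$, $p\in P$, is injective.
   Context: A right LCM semigroup is a left cancellative semigroup $P$ with identity $e$ such that for all $p,q\in P$ either $pP\cap qP=\emptyset$ or $pP\cap qP=rP$ for some $r\in P$; $J(P)=\{pP:p\in P\}\cup\{\emptyset\}$ is its semilattice of principal right ideals (under intersection) and $P^*$ its group of invertible elements. A right action of $P$ on $G$ is a unital semigroup antihomomorphism $\vartheta:P\to\operatorname{End}G$, i.e. $\vartheta_e=\mathrm{id}$ and $\vartheta_p\vartheta_q=\vartheta_{qp}$. The right semidirect product $P{}_\vartheta\!\ltimes G$ is the set $P\times G$ with multiplication $(p,g)(q,h)=(pq,\vartheta_q(g)h)$. Cancellative means both left and right cancellative. *)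

theory Defs
  imports Main
begin

definition left_cancellative :: "'a set \<Rightarrow> ('a \<Rightarrow> 'a \<Rightarrow> 'a) \<Rightarrow> bool" where
  "left_cancellative S m \<longleftrightarrow> (\<forall>a\<in>S. \<forall>b\<in>S. \<forall>c\<in>S. m a b = m a c \<longrightarrow> b = c)"

definition right_cancellative :: "'a set \<Rightarrow> ('a \<Rightarrow> 'a \<Rightarrow> 'a) \<Rightarrow> bool" where
  "right_cancellative S m \<longleftrightarrow> (\<forall>a\<in>S. \<forall>b\<in>S. \<forall>c\<in>S. m b a = m c a \<longrightarrow> b = c)"

definition cancellative :: "'a set \<Rightarrow> ('a \<Rightarrow> 'a \<Rightarrow> 'a) \<Rightarrow> bool" where
  "cancellative S m \<longleftrightarrow> left_cancellative S m \<and> right_cancellative S m"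

definition pideal :: "'a set \<Rightarrow> ('a \<Rightarrow> 'a \<Rightarrow> 'a) \<Rightarrow> 'a \<Rightarrow> 'a set" where
  "pideal S m p = {m p x | x. x \<in> S}"

definition monoid_with :: "'a set \<Rightarrow> ('a \<Rightarrow> 'a \<Rightarrow> 'a) \<Rightarrow> 'a \<Rightarrow> bool" where
  "monoid_with S m e \<longleftrightarrow> e \<in> S \<and> (\<forall>a\<in>S. \<forall>b\<in>S. m a b \<in> S)
     \<and> (\<forall>a\<in>S. \<forall>b\<in>S. \<forall>c\<in>S. m (m a b) c = m a (m b c))
     \<and> (\<forall>a\<in>S. m e a = a \<and> m a e = a)"

definition right_LCM :: "'a set \<Rightarrow> ('a \<Rightarrow> 'a \<Rightarrow> 'a) \<Rightarrow> 'a \<Rightarrow> bool" where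
  "right_LCM S m e \<longleftrightarrow> monoid_with S m e \<and> left_cancellative S m \<and>
     (\<forall>p\<in>S. \<forall>q\<in>S. pideal S m p \<inter> pideal S m q = {} \<or>
        (\<exists>r\<in>S. pideal S m p \<inter> pideal S m q = pideal S m r))"

definition Jsl :: "'a set \<Rightarrow> ('a \<Rightarrow> 'a \<Rightarrow> 'a) \<Rightarrow> 'a set set" where
  "Jsl S m = {pideal S m p | p. p \<in> S} \<union> {{}}"

definition invertibles :: "'a set \<Rightarrow> ('a \<Rightarrow> 'a \<Rightarrow> 'a) \<Rightarrow> 'a \<Rightarrow> 'a set" where
  "invertibles S m e = {p \<in> S. \<exists>q\<in>S. m p q = e \<and> m q p = e}"

definition right_action :: "('p::monoid_mult \<Rightarrow> 'g::group_add \<Rightarrow> 'g) \<Rightarrow> bool" where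
  "right_action \<theta> \<longleftrightarrow> \<theta> 1 = id \<and> (\<forall>p q. \<theta> p \<circ> \<theta> q = \<theta> (q * p))
     \<and> (\<forall>p g h. \<theta> p (g + h) = \<theta> p g + \<theta> p h)"

definition sdp_mult :: "('p::monoid_mult \<Rightarrow> 'g::group_add \<Rightarrow> 'g) \<Rightarrow> 'p \<times> 'g \<Rightarrow> 'p \<times> 'g \<Rightarrow> 'p \<times> 'g" where
  "sdp_mult \<theta> x y = (fst x * fst y, \<theta> (fst y) (snd x) + snd y)"

end

theory Submission
  imports Defs
begin

text \<open>Since the group coordinate of a product (p, g)(q, h) = (pq, \<theta> q g + h) can be made arbitrary
  by the choice of h, the principal right ideal of (p, g) is pP \<times> G. Hence the ideal structure of the
  semidirect product is that of P, and the right LCM property, J(P) and the units transfer directly.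
  Left cancellation only involves P; right cancellation by (p, g) amounts to right cancellation by p
  in P together with injectivity of \<theta> p in the group coordinate.\<close>

lemma right_action_one: "right_action \<theta> \<Longrightarrow> \<theta> 1 g = g"
  by (simp add: right_action_def)

lemma right_action_comp: "right_action \<theta> \<Longrightarrow> \<theta> p (\<theta> q g) = \<theta> (q * p) g"
  unfolding right_action_def by (metis comp_apply)

lemma right_action_add: "right_action \<theta> \<Longrightarrow> \<theta> p (g + h) = \<theta> p g + \<theta> p h"
  by (simp add: right_action_def)

lemma right_action_zero: "right_action \<theta> \<Longrightarrow> \<theta> p 0 = 0"
  using right_action_add[of \<theta> p 0 0] by (simp add: add_left_cancel[of "\<theta> p 0" _ 0, symmetric])

lemma right_action_minus: "right_action \<theta> \<Longrightarrow> \<theta> p (- g) = - \<theta> p g"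
  using right_action_add[of \<theta> p "- g" g] right_action_zero[of \<theta> p]
  by (simp add: eq_neg_iff_add_eq_0)

lemma monoid_with_sdp_mult:
  assumes "right_action \<theta>"
  shows "monoid_with UNIV (sdp_mult \<theta>) (1, 0)"
  using assms
  by (auto simp: monoid_with_def sdp_mult_def right_action_zero right_action_one
      right_action_add right_action_comp mult.assoc add.assoc)

lemma left_cancellative_sdp_mult:
  assumes "left_cancellative (UNIV :: 'p::monoid_mult set) (*)"
  shows "left_cancellative UNIV (sdp_mult (\<theta> :: 'p \<Rightarrow> 'g::group_add \<Rightarrow> 'g))"
  unfolding left_cancellative_def
proof (intro ballI impI)
  fix x y z :: "'p \<times> 'g"
  assume eq: "sdp_mult \<theta> x y = sdp_mult \<theta> x z"
  then have "fst x * fst y = fst x * fst z"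
    by (simp add: sdp_mult_def)
  then have "fst y = fst z"
    using assms unfolding left_cancellative_def by blast
  with eq have "snd y = snd z"
    by (simp add: sdp_mult_def)
  with \<open>fst y = fst z\<close> show "y = z"
    by (simp add: prod_eq_iff)
qed

lemma right_cancellative_sdp_mult_iff:
  fixes \<theta> :: "'p::monoid_mult \<Rightarrow> 'g::group_add \<Rightarrow> 'g"
  assumes "right_action \<theta>"
  shows "right_cancellative UNIV (sdp_mult \<theta>)
    \<longleftrightarrow> right_cancellative (UNIV :: 'p set) (*) \<and> (\<forall>p. inj (\<theta> p))"
proof
  assume "right_cancellative UNIV (sdp_mult \<theta>)"
  then have rc: "y = z" if "sdp_mult \<theta> y x = sdp_mult \<theta> z x" for x y z
    using that unfolding right_cancellative_def by blast
  have "q = r" if "q * p = r * p" for p q r :: 'p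
  proof -
    have "sdp_mult \<theta> (q, 0) (p, 0) = sdp_mult \<theta> (r, 0) (p, 0)"
      using that assms by (simp add: sdp_mult_def right_action_zero)
    then show ?thesis
      by (auto dest: rc)
  qed
  moreover have "g = h" if "\<theta> p g = \<theta> p h" for p g h
  proof -
    have "sdp_mult \<theta> (1, g) (p, 0) = sdp_mult \<theta> (1, h) (p, 0)"
      using that by (simp add: sdp_mult_def)
    then show ?thesis
      by (auto dest: rc)
  qed
  ultimately show "right_cancellative (UNIV :: 'p set) (*) \<and> (\<forall>p. inj (\<theta> p))"
    unfolding right_cancellative_def inj_def by blast
next
  assume P: "right_cancellative (UNIV :: 'p set) (*) \<and> (\<forall>p. inj (\<theta> p))"
  show "right_cancellative UNIV (sdp_mult \<theta>)"
    unfolding right_cancellative_def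
  proof (intro ballI impI)
    fix x y z :: "'p \<times> 'g"
    assume eq: "sdp_mult \<theta> y x = sdp_mult \<theta> z x"
    then have "fst y * fst x = fst z * fst x"
      by (simp add: sdp_mult_def)
    then have "fst y = fst z"
      using P unfolding right_cancellative_def by blast
    with eq have "\<theta> (fst x) (snd y) = \<theta> (fst x) (snd z)"
      by (simp add: sdp_mult_def)
    then have "snd y = snd z"
      using P by (simp add: inj_eq)
    with \<open>fst y = fst z\<close> show "y = z"
      by (simp add: prod_eq_iff)
  qed
qed

lemma pideal_sdp_mult:
  fixes \<theta> :: "'p::monoid_mult \<Rightarrow> 'g::group_add \<Rightarrow> 'g"
  shows "pideal UNIV (sdp_mult \<theta>) (p, g) = pideal UNIV (*) p \<times> UNIV"
proof (intro set_eqI iffI)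
  fix z :: "'p \<times> 'g"
  assume "z \<in> pideal UNIV (*) p \<times> UNIV"
  then obtain q where q: "fst z = p * q"
    by (auto simp: pideal_def)
  have "z = sdp_mult \<theta> (p, g) (q, - \<theta> q g + snd z)"
    by (simp add: sdp_mult_def q add.assoc[symmetric] prod_eq_iff)
  then show "z \<in> pideal UNIV (sdp_mult \<theta>) (p, g)"
    unfolding pideal_def by blast
qed (auto simp: pideal_def sdp_mult_def)

lemma Jsl_sdp_mult:
  fixes \<theta> :: "'p::monoid_mult \<Rightarrow> 'g::group_add \<Rightarrow> 'g"
  shows "Jsl UNIV (sdp_mult \<theta>) = (\<lambda>X. X \<times> UNIV) ` Jsl UNIV (*)"
proof -
  have "{pideal UNIV (sdp_mult \<theta>) x | x. x \<in> UNIV}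
      = (\<lambda>X. X \<times> UNIV) ` {pideal UNIV (*) p | p. p \<in> UNIV}"
  proof (intro set_eqI iffI)
    fix X :: "('p \<times> 'g) set"
    assume "X \<in> {pideal UNIV (sdp_mult \<theta>) x | x. x \<in> UNIV}"
    then obtain p g where "X = pideal UNIV (sdp_mult \<theta>) (p, g)"
      by auto
    then show "X \<in> (\<lambda>X. X \<times> UNIV) ` {pideal UNIV (*) p | p. p \<in> UNIV}"
      unfolding pideal_sdp_mult by blast
  next
    fix X :: "('p \<times> 'g) set"
    assume "X \<in> (\<lambda>X. X \<times> UNIV) ` {pideal UNIV (*) p | p. p \<in> UNIV}"
    then obtain p where "X = pideal UNIV (sdp_mult \<theta>) (p, 0)"
      unfolding pideal_sdp_mult by blast
    then show "X \<in> {pideal UNIV (sdp_mult \<theta>) x | x. x \<in> UNIV}"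
      by blast
  qed
  then show ?thesis
    by (simp add: Jsl_def)
qed

lemma right_LCM_sdp_mult:
  fixes \<theta> :: "'p::monoid_mult \<Rightarrow> 'g::group_add \<Rightarrow> 'g"
  assumes P: "right_LCM (UNIV :: 'p set) (*) 1" and \<theta>: "right_action \<theta>"
  shows "right_LCM UNIV (sdp_mult \<theta>) (1, 0)"
  unfolding right_LCM_def
proof (intro conjI ballI)
  show "monoid_with UNIV (sdp_mult \<theta>) (1, 0)"
    using \<theta> by (rule monoid_with_sdp_mult)
  show "left_cancellative UNIV (sdp_mult \<theta>)"
    using P by (intro left_cancellative_sdp_mult) (simp add: right_LCM_def)
next
  fix x y :: "'p \<times> 'g"
  have ideals: "pideal UNIV (sdp_mult \<theta>) x \<inter> pideal UNIV (sdp_mult \<theta>) y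
      = (pideal UNIV (*) (fst x) \<inter> pideal UNIV (*) (fst y)) \<times> UNIV"
    using pideal_sdp_mult[of \<theta> "fst x" "snd x"] pideal_sdp_mult[of \<theta> "fst y" "snd y"]
    by auto
  from P consider "pideal UNIV (*) (fst x) \<inter> pideal UNIV (*) (fst y) = {}"
    | r where "pideal UNIV (*) (fst x) \<inter> pideal UNIV (*) (fst y) = pideal UNIV (*) r"
    unfolding right_LCM_def by blast
  then show "pideal UNIV (sdp_mult \<theta>) x \<inter> pideal UNIV (sdp_mult \<theta>) y = {} \<or>
      (\<exists>r\<in>UNIV. pideal UNIV (sdp_mult \<theta>) x \<inter> pideal UNIV (sdp_mult \<theta>) y = pideal UNIV (sdp_mult \<theta>) r)"
  proof cases
    case (2 r)
    then have "pideal UNIV (sdp_mult \<theta>) x \<inter> pideal UNIV (sdp_mult \<theta>) y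
        = pideal UNIV (sdp_mult \<theta>) (r, 0)"
      using ideals pideal_sdp_mult[of \<theta> r 0] by simp
    then show ?thesis by blast
  qed (simp add: ideals)
qed

lemma invertibles_sdp_mult:
  fixes \<theta> :: "'p::monoid_mult \<Rightarrow> 'g::group_add \<Rightarrow> 'g"
  assumes "right_action \<theta>"
  shows "invertibles UNIV (sdp_mult \<theta>) (1, 0) = invertibles UNIV (*) 1 \<times> UNIV"
proof (intro set_eqI iffI)
  fix z :: "'p \<times> 'g"
  assume "z \<in> invertibles UNIV (*) 1 \<times> UNIV"
  then obtain q where q: "fst z * q = 1" "q * fst z = 1"
    by (auto simp: invertibles_def)
  have "sdp_mult \<theta> z (q, - \<theta> q (snd z)) = (1, 0)"
    using q by (simp add: sdp_mult_def)
  moreover have "sdp_mult \<theta> (q, - \<theta> q (snd z)) z = (1, 0)"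
    using q assms by (simp add: sdp_mult_def right_action_minus right_action_comp right_action_one)
  ultimately show "z \<in> invertibles UNIV (sdp_mult \<theta>) (1, 0)"
    unfolding invertibles_def by blast
qed (auto simp: invertibles_def sdp_mult_def)

theorem mainTheorem18:
  fixes \<theta> :: "'p::monoid_mult \<Rightarrow> 'g::group_add \<Rightarrow> 'g"
  assumes "right_LCM (UNIV :: 'p set) (*) 1"
    and "right_action \<theta>"
  shows "right_LCM (UNIV :: ('p \<times> 'g) set) (sdp_mult \<theta>) (1, 0)
    \<and> bij_betw (\<lambda>X. X \<times> (UNIV :: 'g set)) (Jsl (UNIV :: 'p set) (*)) (Jsl UNIV (sdp_mult \<theta>))
    \<and> (\<forall>X\<in>Jsl (UNIV :: 'p set) (*). \<forall>Y\<in>Jsl (UNIV :: 'p set) (*).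
          (X \<inter> Y) \<times> (UNIV :: 'g set) = (X \<times> UNIV) \<inter> (Y \<times> UNIV))
    \<and> (\<forall>(p::'p) (g::'g). pideal UNIV (sdp_mult \<theta>) (p, g) = pideal UNIV (*) p \<times> (UNIV :: 'g set))
    \<and> invertibles UNIV (sdp_mult \<theta>) (1, 0) = invertibles (UNIV :: 'p set) (*) 1 \<times> (UNIV :: 'g set)
    \<and> (cancellative UNIV (sdp_mult \<theta>) \<longleftrightarrow>
         cancellative (UNIV :: 'p set) (*) \<and> (\<forall>p. inj (\<theta> p)))"
proof -
  have bij: "bij_betw (\<lambda>X. X \<times> (UNIV :: 'g set)) (Jsl (UNIV :: 'p set) (*)) (Jsl UNIV (sdp_mult \<theta>))"
    unfolding bij_betw_def Jsl_sdp_mult by (simp add: inj_on_def Times_eq_cancel2[OF UNIV_I])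
  have "left_cancellative (UNIV :: 'p set) (*)"
    using assms(1) by (simp add: right_LCM_def)
  then have "cancellative UNIV (sdp_mult \<theta>) \<longleftrightarrow>
      cancellative (UNIV :: 'p set) (*) \<and> (\<forall>p. inj (\<theta> p))"
    by (simp add: cancellative_def left_cancellative_sdp_mult right_cancellative_sdp_mult_iff[OF assms(2)])
  with right_LCM_sdp_mult[OF assms] bij invertibles_sdp_mult[OF assms(2)]
  show ?thesis
    by (simp add: pideal_sdp_mult Times_Int_distrib1)
qed

end
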